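(* Assume $CA_2$. Then there is a Suslin $\omega_1$-pretower, i.e. an $\omega_1$-pretower $\mathcal T$ on a countable set such that every uncountable $\mathcal A\subseteq\mathcal T$ contains distinct $A,B$ with $A\subseteq B$.
   Context: An $\omega_1$-pretower on a countably infinite set $X$ is a family $\mathcal T\subseteq[X]^\omega$ well ordered by $\subsetneq^*$ (where $A\subsetneq^*B$ means $A\setminus B$ is finite and $B\setminus A$ is infinite) with order type $\omega_1$. A type is a sequence $\tau=\{(m_k,n_{k+1},r_{k+1})\}_{k\in\omega}$ of natural numbers with $m_0=1$; $n_k\ge2$ for $k\ge1$; every $r\in\omega$ equals $r_k$ for infinitely many $k$; $m_k>r_{k+1}$; and $m_{k+1}=r_{k+1}+(m_k-r_{k+1})n_{k+1}$ for all $k$. For a set of ordinals $X$ and $\mathcal F\subseteq[X]^{<\omega}$, $\mathcal F_k$ is the set of elements of rank $k$ in $(\mathcal F,\subsetneq)$; $A\sqsubseteq B$ means $A\subseteq B$ and every element of $B$ below an element of $A$ is in $A$; $A<B$ means every element of $A$ is below every element of $B$. $\mathcal F$ is a construction scheme over $X$ of type $\tau$ if (1) every finite subset of $X$ lies in a member of $\mathcal F$; (2) $|F|=m_k$ for $F\in\mathcal F_k$; (3) $E\cap F\sqsubseteq E,F$ for $E,F\in\mathcal F_k$; (4) each $F\in\mathcal F_{k+1}$ is the union of uniquely determined $F_0,\dots,F_{n_{k+1}-1}\in\mathcal F_k$ forming a $\Delta$-system with root $R(F)$, $|R(F)|=r_{k+1}$, $R(F)<F_0\setminus R(F)<\dots<F_{n_{k+1}-1}\setminus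 R(F)$. For a construction scheme $\mathcal F$ over $\omega_1$, $l\ge1$, $F\in\mathcal F_l$ and finite $\mathcal C\subseteq[\omega_1]^{<\omega}$: $F$ captures $\mathcal C$ if $|\mathcal C|\le n_l$ and $\mathcal C$ can be enumerated as $\{c_i\}_{i<|\mathcal C|}$ with $c_i\subseteq F_i$, $c_i\setminus R(F)\neq\emptyset$ and $\phi_i[c_0]=c_i$ where $\phi_i:F_0\to F_i$ is the increasing bijection. $\mathcal F$ is $n$-capturing if for every uncountable $S\subseteq[\omega_1]^{<\omega}$ and every $k\in\omega$ there are $\mathcal C\in[S]^n$, $l>k$ and $F\in\mathcal F_l$ capturing $\mathcal C$. $CA_n$ is the statement: for every type $\tau$ with $n\le n_k$ for all $k\ge1$ there is an $n$-capturing construction scheme over $\omega_1$ of type $\tau$. *)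

theory Defs
  imports "HOL-Library.Countable_Set"
begin

text \<open>A well-ordered type is (order-isomorphic to) omega_1 iff it is uncountable
  and every proper initial segment is countable.\<close>
definition omega1_type :: "'a::wellorder itself \<Rightarrow> bool" where
  "omega1_type _ \<longleftrightarrow> \<not> countable (UNIV :: 'a set) \<and> (\<forall>x::'a. countable {y. y < x})"

definition almost_psubset :: "'b set \<Rightarrow> 'b set \<Rightarrow> bool" where
  "almost_psubset A B \<longleftrightarrow> finite (A - B) \<and> infinite (B - A)"

text \<open>An omega_1-pretower on the countably infinite set nat: a family of infinite
  subsets, well ordered by almost_psubset with order type omega_1 (here: order-isomorphic
  to the omega_1 type 'a).\<close>
definition omega1_pretower :: "'a::wellorder itself \<Rightarrow> nat set set \<Rightarrow> bool" where
  "omega1_pretower _ T \<longleftrightarrow> (\<forall>A\<in>T. infinite A) \<and>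
     (\<exists>f :: 'a \<Rightarrow> nat set. bij_betw f UNIV T \<and> (\<forall>x y. x < y \<longleftrightarrow> almost_psubset (f x) (f y)))"

definition suslin_family :: "nat set set \<Rightarrow> bool" where
  "suslin_family T \<longleftrightarrow> (\<forall>\<A>\<subseteq>T. \<not> countable \<A> \<longrightarrow> (\<exists>A\<in>\<A>. \<exists>B\<in>\<A>. A \<noteq> B \<and> A \<subseteq> B))"

text \<open>A type tau = ((m k, n (k+1), r (k+1)))_k is given by three sequences m, n, r;
  the values n 0 and r 0 are irrelevant.\<close>
definition is_type :: "(nat \<Rightarrow> nat) \<Rightarrow> (nat \<Rightarrow> nat) \<Rightarrow> (nat \<Rightarrow> nat) \<Rightarrow> bool" where
  "is_type m n r \<longleftrightarrow> m 0 = 1 \<and> (\<forall>k\<ge>1. n k \<ge> 2) \<and>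
     (\<forall>x. infinite {k. k \<ge> 1 \<and> r k = x}) \<and>
     (\<forall>k. m k > r (Suc k)) \<and>
     (\<forall>k. m (Suc k) = r (Suc k) + (m k - r (Suc k)) * n (Suc k))"

definition set_less :: "'a::linorder set \<Rightarrow> 'a set \<Rightarrow> bool" (infix "<\<^sub>s" 50) where
  "A <\<^sub>s B \<longleftrightarrow> (\<forall>a\<in>A. \<forall>b\<in>B. a < b)"

definition initial_sub :: "'a::linorder set \<Rightarrow> 'a set \<Rightarrow> bool" (infix "\<sqsubseteq>" 50) where
  "A \<sqsubseteq> B \<longleftrightarrow> A \<subseteq> B \<and> (\<forall>b\<in>B. \<forall>a\<in>A. b < a \<longrightarrow> b \<in> A)"

text \<open>Rank of A in the poset (F, proper subset): the length of a longest strictly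
  increasing chain in F ending at A (all members are finite, so this is a natural number
  and agrees with the usual recursive rank).\<close>
definition rank_in :: "'a set set \<Rightarrow> 'a set \<Rightarrow> nat" where
  "rank_in F A = (GREATEST k. \<exists>c :: nat \<Rightarrow> 'a set.
      (\<forall>i\<le>k. c i \<in> F) \<and> (\<forall>i<k. c i \<subset> c (Suc i)) \<and> c k = A)"

definition level :: "'a set set \<Rightarrow> nat \<Rightarrow> 'a set set" where
  "level F k = {A \<in> F. rank_in F A = k}"

definition decomposition ::
  "'a::linorder set set \<Rightarrow> nat \<Rightarrow> nat \<Rightarrow> nat \<Rightarrow> 'a set \<Rightarrow> (nat \<Rightarrow> 'a set) \<Rightarrow> 'a set \<Rightarrow> bool" where
  "decomposition F k N rr E Fs R \<longleftrightarrow>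
     (\<forall>i<N. Fs i \<in> level F k) \<and> E = (\<Union>i<N. Fs i) \<and>
     (\<forall>i<N. \<forall>j<N. i \<noteq> j \<longrightarrow> Fs i \<inter> Fs j = R) \<and> card R = rr \<and>
     R <\<^sub>s (Fs 0 - R) \<and> (\<forall>i. Suc i < N \<longrightarrow> (Fs i - R) <\<^sub>s (Fs (Suc i) - R))"

definition construction_scheme ::
  "'a::linorder set set \<Rightarrow> (nat \<Rightarrow> nat) \<Rightarrow> (nat \<Rightarrow> nat) \<Rightarrow> (nat \<Rightarrow> nat) \<Rightarrow> bool" where
  "construction_scheme F m n r \<longleftrightarrow>
     (\<forall>A\<in>F. finite A) \<and>
     (\<forall>A. finite A \<longrightarrow> (\<exists>E\<in>F. A \<subseteq> E)) \<and>
     (\<forall>k. \<forall>E\<in>level F k. card E = m k) \<and>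
     (\<forall>k. \<forall>E\<in>level F k. \<forall>E'\<in>level F k. E \<inter> E' \<sqsubseteq> E \<and> E \<inter> E' \<sqsubseteq> E') \<and>
     (\<forall>k. \<forall>E\<in>level F (Suc k).
        \<exists>Fs. (\<exists>R. decomposition F k (n (Suc k)) (r (Suc k)) E Fs R) \<and>
          (\<forall>Gs. (\<exists>R. decomposition F k (n (Suc k)) (r (Suc k)) E Gs R) \<longrightarrow>
                (\<forall>i<n (Suc k). Gs i = Fs i)))"

text \<open>The decomposition of E is
  unique, so quantifying existentially over it is the same as using the canonical one;
  likewise the increasing bijection Fs 0 \<rightarrow> Fs i is unique.\<close>
definition captures ::
  "'a::linorder set set \<Rightarrow> (nat \<Rightarrow> nat) \<Rightarrow> (nat \<Rightarrow> nat) \<Rightarrow> nat \<Rightarrow> 'a set \<Rightarrow> 'a set set \<Rightarrow> bool" where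
  "captures F n r l E C \<longleftrightarrow> l \<ge> 1 \<and> E \<in> level F l \<and> finite C \<and> card C \<le> n l \<and>
     (\<exists>Fs R. decomposition F (l - 1) (n l) (r l) E Fs R \<and>
       (\<exists>c :: nat \<Rightarrow> 'a set. bij_betw c {..<card C} C \<and>
          (\<forall>i<card C. c i \<subseteq> Fs i \<and> c i - R \<noteq> {} \<and>
             (\<exists>\<phi>. bij_betw \<phi> (Fs 0) (Fs i) \<and> strict_mono_on (Fs 0) \<phi> \<and> \<phi> ` (c 0) = c i))))"

definition n_capturing ::
  "nat \<Rightarrow> 'a::linorder set set \<Rightarrow> (nat \<Rightarrow> nat) \<Rightarrow> (nat \<Rightarrow> nat) \<Rightarrow> bool" where
  "n_capturing N F n r \<longleftrightarrow>
     (\<forall>S. (\<forall>s\<in>S. finite s) \<longrightarrow> \<not> countable S \<longrightarrow>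
        (\<forall>k. \<exists>C\<subseteq>S. finite C \<and> card C = N \<and> (\<exists>l>k. \<exists>E\<in>level F l. captures F n r l E C)))"

definition CA :: "'a::wellorder itself \<Rightarrow> nat \<Rightarrow> bool" where
  "CA _ N \<longleftrightarrow> (\<forall>m n r. is_type m n r \<longrightarrow> (\<forall>k\<ge>1. N \<le> n k) \<longrightarrow>
       (\<exists>F :: 'a set set. construction_scheme F m n r \<and> n_capturing N F n r))"

end

theory Submission
  imports Defs
begin

text \<open>Take the type with n_k = 2 for all k and a 2-capturing construction scheme F of
  this type over omega_1. Every point x lies in a member of every level k, and the number
  pos k x of points below x in such a member does not depend on the member. For x < y we
  get pos k x < pos k y from the first level containing both points on, so the codes of
  the hypographs of k \<mapsto> pos k x form an omega_1-pretower. Given uncountably many of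
  them, F captures two singletons {x}, {y} at some level l: the increasing bijection
  between the two halves of the capturing set sends x to y and maps level-k members onto
  level-k members for k < l, so pos k x = pos k y there, and the tower of x is contained
  in the tower of y.\<close>

lemma initial_sub_Un: "A \<sqsubseteq> C \<Longrightarrow> B \<sqsubseteq> C \<Longrightarrow> A \<union> B \<sqsubseteq> C"
  unfolding initial_sub_def by blast

lemma initial_sub_linear:
  assumes "A \<sqsubseteq> C" "B \<sqsubseteq> C"
  shows "A \<subseteq> B \<or> B \<subseteq> A"
proof (rule ccontr)
  assume "\<not> (A \<subseteq> B \<or> B \<subseteq> A)"
  then obtain a b where "a \<in> A" "a \<notin> B" "b \<in> B" "b \<notin> A" by blast
  then show False
    using assms unfolding initial_sub_def by (cases a b rule: linorder_cases) blast+
qed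

lemma initial_sub_card_eq:
  assumes "A \<sqsubseteq> C" "B \<sqsubseteq> C" "finite C" "card A = card B"
  shows "A = B"
proof -
  have "finite A" "finite B"
    using assms(1-3) unfolding initial_sub_def by (auto intro: finite_subset)
  then show ?thesis
    using initial_sub_linear[OF assms(1,2)] assms(4) by (metis card_subset_eq)
qed

lemma initial_sub_image:
  assumes "A \<sqsubseteq> C" "strict_mono_on C \<psi>"
  shows "\<psi> ` A \<sqsubseteq> \<psi> ` C"
  unfolding initial_sub_def
proof safe
  fix y a assume "y \<in> C" "a \<in> A" "\<psi> y < \<psi> a"
  moreover from assms(1) have "a \<in> C" using \<open>a \<in> A\<close> unfolding initial_sub_def by blast
  ultimately have "y < a" using strict_mono_on_less[OF assms(2)] by blast
  then show "\<psi> y \<in> \<psi> ` A" using assms(1) \<open>y \<in> C\<close> \<open>a \<in> A\<close> unfolding initial_sub_def by blast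
qed (use assms(1) initial_sub_def in blast)

lemma increasing_bij_image_initial_sub:
  assumes "bij_betw \<psi> C C'" "strict_mono_on C \<psi>" "finite C"
    and "A \<sqsubseteq> C" "A' \<sqsubseteq> C'" "card A = card A'"
  shows "\<psi> ` A = A'"
proof (rule initial_sub_card_eq)
  show "\<psi> ` A \<sqsubseteq> C'"
    using initial_sub_image[OF assms(4,2)] assms(1) by (simp add: bij_betw_def)
  show "finite C'" using assms(1,3) bij_betw_finite by blast
  have "inj_on \<psi> A"
    using assms(1,4) unfolding initial_sub_def by (meson bij_betw_imp_inj_on inj_on_subset)
  then show "card (\<psi> ` A) = card A'" using assms(6) by (simp add: card_image)
qed (fact assms(5))

lemma card_below_image_strict_mono:
  fixes \<psi> :: "'a::linorder \<Rightarrow> 'b::linorder"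
  assumes "strict_mono_on G \<psi>" "x \<in> G"
  shows "card {y \<in> \<psi> ` G. y < \<psi> x} = card {y \<in> G. y < x}"
proof -
  have "{y \<in> \<psi> ` G. y < \<psi> x} = \<psi> ` {y \<in> G. y < x}"
    using strict_mono_on_less[OF assms(1)] assms(2) by auto
  moreover have "inj_on \<psi> {y \<in> G. y < x}"
    using strict_mono_on_imp_inj_on[OF assms(1)] by (rule inj_on_subset) auto
  ultimately show ?thesis by (simp add: card_image)
qed

lemma two_block_initial:
  fixes A B R :: "'a::linorder set"
  assumes "A \<inter> B = R" "R <\<^sub>s A - R" "A - R <\<^sub>s B - R" "A - R \<noteq> {}"
  shows "R \<sqsubseteq> A \<union> B" "A \<sqsubseteq> A \<union> B"
proof -
  obtain z where z: "z \<in> A - R" using assms(4) by blast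
  have below_B: "a < b" if "a \<in> A" "b \<in> B - R" for a b
  proof (cases "a \<in> R")
    case True
    then have "a < z" using z assms(2) unfolding set_less_def by blast
    also have "z < b" using z that(2) assms(3) unfolding set_less_def by blast
    finally show ?thesis .
  next
    case False
    then show ?thesis using that assms(3) unfolding set_less_def by blast
  qed
  have "b \<in> R" if "b \<in> A \<union> B" "a \<in> R" "b < a" for a b
  proof (rule ccontr)
    assume "b \<notin> R"
    then have "a < b"
      using that(1,2) assms(1,2) below_B[of a b] unfolding set_less_def by blast
    then show False using that(3) by simp
  qed
  moreover have "b \<in> A" if "b \<in> A \<union> B" "a \<in> A" "b < a" for a b
    using that below_B[of a b] assms(1) by auto
  ultimately show "R \<sqsubseteq> A \<union> B" "A \<sqsubseteq> A \<union> B"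
    unfolding initial_sub_def using assms(1) by auto
qed

lemma decomposition_two_iff:
  "decomposition F k 2 rr E Fs R \<longleftrightarrow>
    Fs 0 \<in> level F k \<and> Fs 1 \<in> level F k \<and> E = Fs 0 \<union> Fs 1 \<and> Fs 0 \<inter> Fs 1 = R \<and>
    card R = rr \<and> R <\<^sub>s Fs 0 - R \<and> Fs 0 - R <\<^sub>s Fs 1 - R"
proof -
  have "{..<(2::nat)} = {0, 1}" by auto
  moreover have "(\<forall>i<(2::nat). P i) \<longleftrightarrow> P 0 \<and> P 1" for P
    by (auto simp: less_2_cases_iff)
  moreover have "(\<forall>i. Suc i < (2::nat) \<longrightarrow> P i) \<longleftrightarrow> P 0" for P by auto
  ultimately show ?thesis unfolding decomposition_def by auto
qed

lemma captures_singleton_pair: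
  assumes "captures F n r l E C" "card C = 2" "C \<subseteq> (\<lambda>x. {x}) ` X"
  obtains Fs R \<psi> x where "decomposition F (l - 1) (n l) (r l) E Fs R"
    "bij_betw \<psi> (Fs 0) (Fs 1)" "strict_mono_on (Fs 0) \<psi>"
    "x \<in> Fs 0 - R" "\<psi> x \<in> Fs 1 - R" "x \<in> X" "\<psi> x \<in> X"
proof -
  obtain Fs R c where dec: "decomposition F (l - 1) (n l) (r l) E Fs R"
    and c: "bij_betw c {..<2} C"
    and ci: "\<And>i. i < 2 \<Longrightarrow> c i \<subseteq> Fs i \<and> c i - R \<noteq> {} \<and>
      (\<exists>\<phi>. bij_betw \<phi> (Fs 0) (Fs i) \<and> strict_mono_on (Fs 0) \<phi> \<and> \<phi> ` c 0 = c i)"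
    using assms(1,2) unfolding captures_def by auto
  obtain \<psi> where \<psi>: "bij_betw \<psi> (Fs 0) (Fs 1)" "strict_mono_on (Fs 0) \<psi>" "\<psi> ` c 0 = c 1"
    using ci[of 1] by auto
  have "c 0 \<in> (\<lambda>x. {x}) ` X" "c 1 \<in> (\<lambda>x. {x}) ` X"
    using c assms(3) by (auto simp: bij_betw_def)
  then obtain x where x: "c 0 = {x}" "x \<in> X" and x1: "c 1 = {\<psi> x}" "\<psi> x \<in> X"
    using \<psi>(3) by auto
  have "x \<in> Fs 0 - R" "\<psi> x \<in> Fs 1 - R" using ci[of 0] ci[of 1] x(1) x1(1) by auto
  then show ?thesis using that dec \<psi> x x1 by blast
qed

definition hypograph :: "(nat \<Rightarrow> nat) \<Rightarrow> nat set" where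
  "hypograph p = prod_encode ` {(k, i). i \<le> p k}"

lemma infinite_hypograph: "infinite (hypograph p)"
proof -
  have "range (\<lambda>k. prod_encode (k, 0)) \<subseteq> hypograph p" unfolding hypograph_def by auto
  moreover have "inj (\<lambda>k. prod_encode (k, 0))" by (auto simp: inj_def)
  ultimately show ?thesis by (metis finite_subset finite_imageD infinite_UNIV_nat)
qed

lemma hypograph_mono: "(\<And>k. p k \<le> q k) \<Longrightarrow> hypograph p \<subseteq> hypograph q"
  unfolding hypograph_def by (rule image_mono) (auto intro: le_trans)

lemma almost_psubset_hypograph:
  assumes "\<And>k. j \<le> k \<Longrightarrow> p k < q k"
  shows "almost_psubset (hypograph p) (hypograph q)"
proof -
  have "hypograph p - hypograph q \<subseteq> prod_encode ` (SIGMA k:{..<j}. {..p k})"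
    using assms by (force simp: hypograph_def not_le)
  then have "finite (hypograph p - hypograph q)" by (rule finite_subset) auto
  moreover have "(\<lambda>k. prod_encode (k, q k)) ` {j..} \<subseteq> hypograph q - hypograph p"
    using assms by (force simp: hypograph_def dest: leD)
  moreover have "inj_on (\<lambda>k. prod_encode (k, q k)) {j..}"
    by (auto simp: inj_on_def)
  ultimately show ?thesis
    unfolding almost_psubset_def by (metis finite_subset finite_imageD infinite_Ici)
qed

lemma omega1_pretower_range:
  fixes f :: "'a::wellorder \<Rightarrow> nat set"
  assumes "\<And>x. infinite (f x)" and "\<And>x y. x < y \<Longrightarrow> almost_psubset (f x) (f y)"
  shows "omega1_pretower TYPE('a) (range f)"
proof -
  have irrefl: "\<not> almost_psubset A A" and asym: "almost_psubset A B \<Longrightarrow> \<not> almost_psubset B A"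
    for A B :: "nat set"
    unfolding almost_psubset_def by auto
  have iff: "x < y \<longleftrightarrow> almost_psubset (f x) (f y)" for x y
    using assms(2)[of x y] assms(2)[of y x] irrefl asym by (cases x y rule: linorder_cases) auto
  have "inj f" by (rule injI) (metis iff irrefl linorder_neq_iff)
  then show ?thesis
    unfolding omega1_pretower_def using assms(1) iff by (auto simp: bij_betw_def)
qed

lemma ex_binary_type: "\<exists>m r. is_type m (\<lambda>_. 2) r"
proof -
  \<comment> \<open>r (k + 1) is the first coordinate of the k-th pair, so every value recurs
    infinitely often and r (k + 1) \<le> k < m k.\<close>
  define r :: "nat \<Rightarrow> nat" where "r k = fst (prod_decode (k - 1))" for k
  define m :: "nat \<Rightarrow> nat" where "m = rec_nat 1 (\<lambda>k mk. r (Suc k) + (mk - r (Suc k)) * 2)"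
  have m_Suc: "m (Suc k) = r (Suc k) + (m k - r (Suc k)) * 2" for k by (simp add: m_def)
  have r_le: "r (Suc k) \<le> k" for k
    using le_prod_encode_1[of "fst (prod_decode k)" "snd (prod_decode k)"] by (simp add: r_def)
  have m_gt: "k < m k" for k
  proof (induction k)
    case (Suc k)
    have "r (Suc k) \<le> k" by (rule r_le)
    then show ?case using Suc.IH unfolding m_Suc by simp
  qed (simp add: m_def)
  have "infinite {k. k \<ge> 1 \<and> r k = x}" for x
  proof -
    have "range (\<lambda>y. Suc (prod_encode (x, y))) \<subseteq> {k. k \<ge> 1 \<and> r k = x}" by (auto simp: r_def)
    moreover have "inj (\<lambda>y. Suc (prod_encode (x, y)))" by (auto simp: inj_def)
    ultimately show ?thesis by (metis finite_subset finite_imageD infinite_UNIV_nat)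
  qed
  moreover have "m 0 = 1" by (simp add: m_def)
  moreover have "r (Suc k) < m k" for k using r_le m_gt le_less_trans by blast
  ultimately have "is_type m (\<lambda>_. 2) r"
    unfolding is_type_def using m_Suc by auto
  then show ?thesis by blast
qed

locale binary_scheme =
  fixes F :: "'a::linorder set set" and m r :: "nat \<Rightarrow> nat"
  assumes scheme: "construction_scheme F m (\<lambda>_. 2) r"
    and type: "is_type m (\<lambda>_. 2) r"
    and infinite_points: "infinite (UNIV :: 'a set)"
begin

lemma finite_member: "A \<in> F \<Longrightarrow> finite A"
  using scheme unfolding construction_scheme_def by simp

lemma member_cover: "finite A \<Longrightarrow> \<exists>E\<in>F. A \<subseteq> E"
  using scheme unfolding construction_scheme_def by simp

lemma card_level: "E \<in> level F k \<Longrightarrow> card E = m k"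
  using scheme unfolding construction_scheme_def by simp

lemma level_inter_initial:
  "E \<in> level F k \<Longrightarrow> E' \<in> level F k \<Longrightarrow> E \<inter> E' \<sqsubseteq> E \<and> E \<inter> E' \<sqsubseteq> E'"
  using scheme unfolding construction_scheme_def by simp

lemma finite_level: "E \<in> level F k \<Longrightarrow> finite E"
  unfolding level_def using finite_member by blast

lemma member_level_rank: "E \<in> F \<Longrightarrow> E \<in> level F (rank_in F E)"
  unfolding level_def by simp

lemma strict_mono_m: "strict_mono m"
proof (unfold strict_mono_Suc_iff, intro allI)
  fix k
  have "r (Suc k) < m k" "m (Suc k) = r (Suc k) + (m k - r (Suc k)) * 2"
    using type unfolding is_type_def by simp_all
  then show "m k < m (Suc k)" by simp
qed

lemma level_Suc_split:
  assumes "E \<in> level F (Suc k)"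
  obtains A B R where "A \<in> level F k" "B \<in> level F k" "E = A \<union> B" "A \<inter> B = R"
    "card R = r (Suc k)" "R <\<^sub>s A - R" "A - R <\<^sub>s B - R"
proof -
  have "\<exists>Fs R. decomposition F k 2 (r (Suc k)) E Fs R"
    using scheme assms unfolding construction_scheme_def by meson
  then obtain Fs R where "decomposition F k 2 (r (Suc k)) E Fs R" by blast
  then show ?thesis unfolding decomposition_two_iff by (intro that[of "Fs 0" "Fs 1" R]) auto
qed

lemma level_Suc_eq_Un:
  assumes "E \<in> level F (Suc k)"
  shows "\<exists>A\<in>level F k. \<exists>B\<in>level F k. E = A \<union> B"
  by (rule level_Suc_split[OF assms]) blast

lemma level_Suc_split_initial:
  assumes "E \<in> level F (Suc k)"
  obtains A B R where "A \<in> level F k" "B \<in> level F k" "E = A \<union> B" "B = R \<union> (E - A)"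
    "card R = r (Suc k)" "R \<sqsubseteq> E" "A \<sqsubseteq> E"
proof -
  obtain A B R where split: "A \<in> level F k" "B \<in> level F k" "E = A \<union> B" "A \<inter> B = R"
    "card R = r (Suc k)" "R <\<^sub>s A - R" "A - R <\<^sub>s B - R"
    by (rule level_Suc_split[OF assms])
  have "card R < card A" using split(1,5) card_level type unfolding is_type_def by simp
  then have "A - R \<noteq> {}" using split(4) by (auto simp: Int_absorb2)
  have "B = R \<union> (E - A)" using split(3,4) by blast
  moreover have "R \<sqsubseteq> E" "A \<sqsubseteq> E"
    using two_block_initial[OF split(4,6,7) \<open>A - R \<noteq> {}\<close>] split(3) by simp_all
  ultimately show ?thesis by (rule that[OF split(1-3) _ split(5)])
qed

lemma level_descend:
  "E \<in> level F j \<Longrightarrow> x \<in> E \<Longrightarrow> k \<le> j \<Longrightarrow> \<exists>G\<in>level F k. x \<in> G \<and> G \<subseteq> E"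
proof (induction j arbitrary: E)
  case (Suc j)
  show ?case
  proof (cases "k = Suc j")
    case False
    then have "k \<le> j" using Suc.prems(3) by simp
    obtain A B where AB: "A \<in> level F j" "B \<in> level F j" "E = A \<union> B"
      using level_Suc_eq_Un[OF Suc.prems(1)] by blast
    then obtain H where H: "H \<in> level F j" "x \<in> H" "H \<subseteq> E"
      using Suc.prems(2) by blast
    obtain G where "G \<in> level F k" "x \<in> G" "G \<subseteq> H"
      using Suc.IH[OF H(1,2) \<open>k \<le> j\<close>] by blast
    then show ?thesis using H(3) by blast
  qed (use Suc.prems in auto)
qed auto

lemma level_mem_exists: "\<exists>G\<in>level F k. x \<in> G"
proof -
  obtain A :: "'a set" where A: "finite A" "card A = Suc (m k)"
    using infinite_arbitrarily_large[OF infinite_points] by blast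
  obtain E where E: "E \<in> F" "insert x A \<subseteq> E"
    using member_cover[of "insert x A"] A(1) by blast
  have "card A \<le> card E" using card_mono[OF finite_member[OF E(1)]] E(2) by blast
  then have "m k < m (rank_in F E)"
    using A(2) card_level[OF member_level_rank[OF E(1)]] by simp
  then have "k \<le> rank_in F E" using strict_mono_m by (simp add: strict_mono_less)
  then show ?thesis using level_descend[OF member_level_rank[OF E(1)]] E(2) by blast
qed

lemma level_inter_initial_lower:
  "E \<in> level F k \<Longrightarrow> G \<in> level F l \<Longrightarrow> l \<le> k \<Longrightarrow> E \<inter> G \<sqsubseteq> G"
proof (induction k arbitrary: E)
  case (Suc k)
  show ?case
  proof (cases "l = Suc k")
    case False
    then have "l \<le> k" using Suc.prems(3) by simp
    obtain A B where "A \<in> level F k" "B \<in> level F k" "E = A \<union> B"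
      using level_Suc_eq_Un[OF Suc.prems(1)] by blast
    moreover from calculation have "A \<inter> G \<sqsubseteq> G" "B \<inter> G \<sqsubseteq> G"
      using Suc.IH[OF _ Suc.prems(2) \<open>l \<le> k\<close>] by blast+
    ultimately show ?thesis by (simp add: Int_Un_distrib2 initial_sub_Un)
  qed (use Suc.prems level_inter_initial in auto)
qed (use level_inter_initial in auto)

definition pos :: "nat \<Rightarrow> 'a \<Rightarrow> nat" where
  "pos k x = card {y \<in> (SOME G. G \<in> level F k \<and> x \<in> G). y < x}"

lemma pos_eq_card_below:
  assumes "G \<in> level F k" "x \<in> G"
  shows "pos k x = card {y \<in> G. y < x}"
proof -
  define G0 where "G0 = (SOME G. G \<in> level F k \<and> x \<in> G)"
  obtain G1 where "G1 \<in> level F k \<and> x \<in> G1" using level_mem_exists by blast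
  then have G0: "G0 \<in> level F k \<and> x \<in> G0" unfolding G0_def by (rule someI)
  have "{y \<in> G0. y < x} = {y \<in> G. y < x}"
    using level_inter_initial[OF conjunct1[OF G0] assms(1)] G0 assms(2)
    unfolding initial_sub_def by blast
  then show ?thesis unfolding pos_def G0_def[symmetric] by simp
qed

lemma pos_less:
  assumes "x < y" "G \<in> level F j" "x \<in> G" "y \<in> G" "j \<le> k"
  shows "pos k x < pos k y"
proof -
  obtain G' where G': "G' \<in> level F k" "y \<in> G'" using level_mem_exists by blast
  have "x \<in> G'"
    using level_inter_initial_lower[OF G'(1) assms(2,5)] assms(1,3,4) G'(2)
    unfolding initial_sub_def by blast
  then have "{z \<in> G'. z < x} \<subset> {z \<in> G'. z < y}" using assms(1) by auto
  then have "card {z \<in> G'. z < x} < card {z \<in> G'. z < y}"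
    using finite_level[OF G'(1)] by (auto intro: psubset_card_mono)
  then show ?thesis using pos_eq_card_below[OF G'(1) \<open>x \<in> G'\<close>] pos_eq_card_below[OF G'] by simp
qed

lemma pos_eventually_less:
  assumes "x < y"
  shows "\<exists>j. \<forall>k\<ge>j. pos k x < pos k y"
proof -
  obtain E where E: "E \<in> F" "x \<in> E" "y \<in> E" using member_cover[of "{x, y}"] by auto
  then show ?thesis using pos_less[OF assms member_level_rank[OF E(1)] E(2,3)] by blast
qed

lemma increasing_bij_halves:
  assumes "H \<in> level F (Suc j)" "H' \<in> level F (Suc j)"
    and "bij_betw \<psi> H H'" "strict_mono_on H \<psi>"
  obtains A B where "A \<in> level F j" "B \<in> level F j" "H = A \<union> B"
    "\<psi> ` A \<in> level F j" "\<psi> ` B \<in> level F j"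
proof -
  obtain A B R where s: "A \<in> level F j" "B \<in> level F j" "H = A \<union> B" "B = R \<union> (H - A)"
    "card R = r (Suc j)" "R \<sqsubseteq> H" "A \<sqsubseteq> H"
    by (rule level_Suc_split_initial[OF assms(1)])
  obtain A' B' R' where s': "A' \<in> level F j" "B' \<in> level F j" "H' = A' \<union> B'" "B' = R' \<union> (H' - A')"
    "card R' = r (Suc j)" "R' \<sqsubseteq> H'" "A' \<sqsubseteq> H'"
    by (rule level_Suc_split_initial[OF assms(2)])
  have fin: "finite H" using finite_level[OF assms(1)] .
  have A: "\<psi> ` A = A'"
    using increasing_bij_image_initial_sub[OF assms(3,4) fin s(7) s'(7)] card_level s(1) s'(1)
    by simp
  have "\<psi> ` R = R'"
    using increasing_bij_image_initial_sub[OF assms(3,4) fin s(6) s'(6)] s(5) s'(5) by simp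
  moreover have "\<psi> ` (H - A) = \<psi> ` H - \<psi> ` A"
    using bij_betw_imp_inj_on[OF assms(3)] s(3) by (simp add: inj_on_image_set_diff)
  then have "\<psi> ` (H - A) = H' - A'" using A bij_betw_imp_surj_on[OF assms(3)] by simp
  ultimately have "\<psi> ` B = B'" using s(4) s'(4) by (simp add: image_Un)
  then show ?thesis using that s(1-3) s'(1,2) A by simp
qed

lemma increasing_bij_level_block:
  assumes "H \<in> level F j" "H' \<in> level F j" "bij_betw \<psi> H H'" "strict_mono_on H \<psi>"
    and "x \<in> H" "k \<le> j"
  shows "\<exists>G\<in>level F k. x \<in> G \<and> G \<subseteq> H \<and> \<psi> ` G \<in> level F k"
  using assms
proof (induction j arbitrary: H H')
  case 0
  then show ?case using bij_betw_imp_surj_on[OF 0(3)] by auto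
next
  case (Suc j)
  show ?case
  proof (cases "k = Suc j")
    case True
    then show ?thesis using Suc.prems(1,2,5) bij_betw_imp_surj_on[OF Suc.prems(3)] by auto
  next
    case False
    then have "k \<le> j" using Suc.prems(6) by simp
    have block: "\<exists>G\<in>level F k. x \<in> G \<and> G \<subseteq> H \<and> \<psi> ` G \<in> level F k"
      if C: "C \<in> level F j" "\<psi> ` C \<in> level F j" "C \<subseteq> H" "x \<in> C" for C
    proof -
      have "bij_betw \<psi> C (\<psi> ` C)" by (rule bij_betw_subset[OF Suc.prems(3) C(3) refl])
      moreover have "strict_mono_on C \<psi>" by (rule monotone_on_subset[OF Suc.prems(4) C(3)])
      ultimately obtain G where "G \<in> level F k" "x \<in> G" "G \<subseteq> C" "\<psi> ` G \<in> level F k"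
        using Suc.IH[OF C(1,2) _ _ C(4) \<open>k \<le> j\<close>] by blast
      then show ?thesis using C(3) by blast
    qed
    obtain A B where AB: "A \<in> level F j" "B \<in> level F j" "H = A \<union> B"
      "\<psi> ` A \<in> level F j" "\<psi> ` B \<in> level F j"
      by (rule increasing_bij_halves[OF Suc.prems(1-4)])
    show ?thesis using block[OF AB(1,4)] block[OF AB(2,5)] AB(3) Suc.prems(5) by blast
  qed
qed

lemma pos_increasing_bij:
  assumes "H \<in> level F j" "H' \<in> level F j" "bij_betw \<psi> H H'" "strict_mono_on H \<psi>"
    and "x \<in> H" "k \<le> j"
  shows "pos k (\<psi> x) = pos k x"
proof -
  obtain G where G: "G \<in> level F k" "x \<in> G" "G \<subseteq> H" "\<psi> ` G \<in> level F k"
    using increasing_bij_level_block[OF assms] by blast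
  have "strict_mono_on G \<psi>" using assms(4) G(3) by (rule monotone_on_subset)
  then show ?thesis
    using pos_eq_card_below[OF G(4)] pos_eq_card_below[OF G(1,2)]
      card_below_image_strict_mono G(2) by simp
qed

definition tower :: "'a \<Rightarrow> nat set" where
  "tower x = hypograph (\<lambda>k. pos k x)"

lemma tower_almost_psubset:
  assumes "x < y"
  shows "almost_psubset (tower x) (tower y)"
proof -
  obtain j where "\<forall>k\<ge>j. pos k x < pos k y" using pos_eventually_less[OF assms] by blast
  then have "\<And>k. j \<le> k \<Longrightarrow> pos k x < pos k y" by blast
  then show ?thesis unfolding tower_def by (rule almost_psubset_hypograph)
qed

lemma tower_psubset_if_captured:
  assumes "E \<in> level F (Suc j)" "decomposition F j 2 (r (Suc j)) E Fs R"
    and "bij_betw \<psi> (Fs 0) (Fs 1)" "strict_mono_on (Fs 0) \<psi>"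
    and "x \<in> Fs 0 - R" "\<psi> x \<in> Fs 1 - R"
  shows "tower x \<subset> tower (\<psi> x)"
proof -
  have d: "Fs 0 \<in> level F j" "Fs 1 \<in> level F j" "E = Fs 0 \<union> Fs 1" "Fs 0 - R <\<^sub>s Fs 1 - R"
    using assms(2) unfolding decomposition_two_iff by auto
  have "x < \<psi> x" using d(4) assms(5,6) unfolding set_less_def by blast
  have "x \<in> E" "\<psi> x \<in> E" using d(3) assms(5,6) by blast+
  have "pos k x \<le> pos k (\<psi> x)" for k
  proof (cases "Suc j \<le> k")
    case True
    show ?thesis by (rule less_imp_le[OF pos_less[OF \<open>x < \<psi> x\<close> assms(1) \<open>x \<in> E\<close> \<open>\<psi> x \<in> E\<close> True]])
  next
    case False
    then have "k \<le> j" by simp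
    show ?thesis using pos_increasing_bij[OF d(1,2) assms(3,4) _ \<open>k \<le> j\<close>] assms(5) by simp
  qed
  then have "tower x \<subseteq> tower (\<psi> x)" unfolding tower_def by (rule hypograph_mono)
  moreover have "tower x \<noteq> tower (\<psi> x)"
    using tower_almost_psubset[OF \<open>x < \<psi> x\<close>] unfolding almost_psubset_def by auto
  ultimately show ?thesis by blast
qed

lemma suslin_family_tower:
  assumes "n_capturing 2 F (\<lambda>_. 2) r"
  shows "suslin_family (range tower)"
  unfolding suslin_family_def
proof (intro allI impI)
  fix \<A> assume sub: "\<A> \<subseteq> range tower" and unc: "\<not> countable \<A>"
  define X where "X = tower -` \<A>"
  have unc_X: "\<not> countable ((\<lambda>x. {x}) ` X)"
  proof
    assume "countable ((\<lambda>x. {x}) ` X)"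
    then have "countable X" by (rule countable_image_inj_on) (auto simp: inj_on_def)
    moreover have "\<A> = tower ` X" using sub unfolding X_def by auto
    ultimately show False using unc by simp
  qed
  have "\<forall>s\<in>(\<lambda>x. {x}) ` X. finite s" by auto
  then obtain C l E where C: "C \<subseteq> (\<lambda>x. {x}) ` X" "card C = 2"
    and l: "l > 0" "E \<in> level F l" and capt: "captures F (\<lambda>_. 2) r l E C"
    using assms[unfolded n_capturing_def, rule_format, OF _ unc_X, of 0] by blast
  obtain j where j: "l = Suc j" using l(1) gr0_implies_Suc by blast
  obtain Fs R \<psi> x where dec: "decomposition F (l - 1) 2 (r l) E Fs R"
    and \<psi>: "bij_betw \<psi> (Fs 0) (Fs 1)" "strict_mono_on (Fs 0) \<psi>"
    and x: "x \<in> Fs 0 - R" "\<psi> x \<in> Fs 1 - R" "x \<in> X" "\<psi> x \<in> X"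
    by (rule captures_singleton_pair[OF capt C(2,1)])
  have "decomposition F j 2 (r (Suc j)) E Fs R" using dec j by simp
  then have "tower x \<subset> tower (\<psi> x)"
    using tower_psubset_if_captured[OF l(2)[unfolded j] _ \<psi> x(1,2)] by blast
  then show "\<exists>A\<in>\<A>. \<exists>B\<in>\<A>. A \<noteq> B \<and> A \<subseteq> B"
    using x(3,4) unfolding X_def by blast
qed

end

theorem mainTheorem13:
  assumes "omega1_type TYPE('a::wellorder)"
    and "CA TYPE('a) 2"
  shows "\<exists>T :: nat set set. omega1_pretower TYPE('a) T \<and> suslin_family T"
proof -
  obtain m r where type: "is_type m (\<lambda>_. 2) r" using ex_binary_type by blast
  then obtain F :: "'a set set"
    where F: "construction_scheme F m (\<lambda>_. 2) r" "n_capturing 2 F (\<lambda>_. 2) r"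
    using assms(2) unfolding CA_def by fastforce
  have "infinite (UNIV :: 'a set)"
    using assms(1) countable_finite unfolding omega1_type_def by blast
  then interpret binary_scheme F m r using F(1) type by unfold_locales
  have "omega1_pretower TYPE('a) (range tower)"
  proof (rule omega1_pretower_range)
    show "infinite (tower x)" for x unfolding tower_def by (rule infinite_hypograph)
  qed (rule tower_almost_psubset)
  then show ?thesis using suslin_family_tower[OF F(2)] by blast
qed

end
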